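(* For every integer $n\ge0$, $$\sum_{k=0}^{2n}\frac{(-1)^k}{\binom{2n}{k}^2}=(2n+1)\frac{(-1)^n}{\binom{2n}{n}}\left(\frac34\sum_{k=1}^n\frac{(-1)^k\binom{2k}{k}}{k}+\sum_{k=0}^n\frac{(-1)^k\binom{2k}{k}}{2k+1}\right).$$ *)

theory Defs
  imports Complex_Main
begin

end

theory Submission
  imports Defs
begin

text \<open>
  Zeilberger's algorithm applied to the alternating sums
  \<open>S m = \<Sum>k=0..m. (-1)^k / (m choose k)^2\<close> yields, for even \<open>N\<close>, the first-order
  inhomogeneous recurrence \<open>S (N+2) + c\<^sub>N S N = (5N+13)/(2N+4)\<close> with
  \<open>c\<^sub>N = (N+3)(N+2)/(4(N+1)^2)\<close>; it is certified by a rational function \<open>G\<close> whose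
  differences \<open>G (k+1) - G k\<close> are the summands, which reduces to a single polynomial identity.
  Writing \<open>S (2n) = (2n+1) (-1)^n T n / (2n choose n)\<close>, the ratio
  \<open>(n+1) (2n+2 choose n+1) = 2 (2n+1) (2n choose n)\<close> of consecutive central binomial
  coefficients turns the recurrence into \<open>T (n+1) - T n\<close> being exactly the new terms
  of the two central binomial sums, so the claim follows by induction on \<open>n\<close>.
\<close>

definition zeilberger_poly :: "real \<Rightarrow> real \<Rightarrow> real" where
  "zeilberger_poly m x = - (x^2)/2 + (3*m+1)*x/2 - m*(5*m+3)/4"

lemma zeilberger_poly_identity:
  fixes x y :: real
  shows "(y+2-x)^2 * (y+1-x)^2 + (y+3)*(y+2)^3/4
       = - zeilberger_poly (y+2) (x+1) * (x+1)^2 - zeilberger_poly (y+2) x * (y+1-x)^2"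
  unfolding zeilberger_poly_def by (simp add: field_simps) algebra

lemma of_nat_binomial_absorb_comp:
  "(real n + 1 - real k) * real (Suc n choose k) = (real n + 1) * real (n choose k)"
  using gbinomial_absorb_comp[of "real (Suc n)" k] by (simp add: binomial_gbinomial add.commute)

lemma of_nat_binomial_absorption:
  "(real k + 1) * real (Suc n choose Suc k) = (real n + 1) * real (n choose k)"
  using arg_cong[OF binomial_absorption[of k "Suc n"], of real] by (simp add: algebra_simps)

lemma central_binomial_Suc:
  "(real n + 1) * real ((2 * Suc n) choose Suc n) = 2 * (2 * real n + 1) * real ((2 * n) choose n)"
proof -
  have "(real n + 1) * real ((2 * Suc n) choose Suc n) = (2 * real n + 2) * real (Suc (2 * n) choose n)"
    using of_nat_binomial_absorption[of n "Suc (2 * n)"] by simp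
  also have "\<dots> = 2 * ((real (2 * n) + 1 - real n) * real (Suc (2 * n) choose n))"
    by simp
  also have "\<dots> = 2 * (2 * real n + 1) * real ((2 * n) choose n)"
    unfolding of_nat_binomial_absorb_comp by simp
  finally show ?thesis .
qed

text \<open>Since \<open>(N+2-k) (N+2 choose k) = (N+2) (N+1 choose k)\<close>, this is the usual certificate
  \<open>P k (-1)^k / ((N+2-k) (N+2 choose k))^2\<close>, written without nat subtraction.\<close>

definition zeilberger_certificate :: "nat \<Rightarrow> nat \<Rightarrow> real" where
  "zeilberger_certificate N k =
     zeilberger_poly (real N + 2) (real k) * (-1)^k / ((real N + 2) * real (Suc N choose k))^2"

lemma zeilberger_certificate_telescopes:
  assumes "k \<le> N"
  shows "(-1)^k / (real ((N+2) choose k))^2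
           + (real N + 3) * (real N + 2) / (4 * (real N + 1)^2) * ((-1)^k / (real (N choose k))^2)
         = zeilberger_certificate N (Suc k) - zeilberger_certificate N k"
proof -
  define x y where "x = real k" and "y = real N"
  define A b D D' where "A = real ((N+2) choose k)" and "b = real (N choose k)"
    and "D = real (Suc N choose k)" and "D' = real (Suc N choose Suc k)"
  have pos: "A > 0" "b > 0" "D > 0" "D' > 0" "y + 1 - x > 0" "x \<ge> 0"
    using assms by (simp_all add: A_def b_def D_def D'_def x_def y_def del: binomial_Suc_Suc)
  have A: "(y + 2) * D = (y + 2 - x) * A"
    using of_nat_binomial_absorb_comp[of "Suc N" k] by (simp add: A_def D_def x_def y_def algebra_simps)
  have b: "(y + 1 - x) * D = (y + 1) * b"
    using of_nat_binomial_absorb_comp[of N k] by (simp add: b_def D_def x_def y_def algebra_simps)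
  have D': "(y + 1 - x) * D = (x + 1) * D'"
    using of_nat_binomial_absorption[of k N] b by (simp add: b_def D'_def x_def y_def algebra_simps del: binomial_Suc_Suc)
  \<comment> \<open>\<open>E\<close> clears all four denominators, leaving \<open>zeilberger_poly_identity\<close>.\<close>
  define E where "E = ((y + 2) * D * (y + 1 - x))^2"
  have "E \<noteq> 0"
    using pos by (simp add: E_def)
  have E_b: "E = ((y + 2) * ((y + 1) * b))^2"
    unfolding E_def b[symmetric] by (simp add: ac_simps)
  have E_D': "E = ((y + 2) * ((x + 1) * D'))^2"
    unfolding E_def D'[symmetric] by (simp add: ac_simps)
  have cert: "zeilberger_certificate N k = (-1)^k * zeilberger_poly (y+2) x / ((y+2) * D)^2"
    by (simp add: zeilberger_certificate_def D_def x_def y_def)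
  have cert_Suc: "zeilberger_certificate N (Suc k)
      = - ((-1)^k * zeilberger_poly (y+2) (x+1) / ((y+2) * D')^2)"
    by (simp add: zeilberger_certificate_def D'_def x_def y_def add.commute del: binomial_Suc_Suc)
  have A_part: "(-1)^k / A^2 * E = (-1)^k * ((y+2-x)^2 * (y+1-x)^2)"
    using pos unfolding E_def A by (simp add: power_mult_distrib)
  have b_part: "(y + 3) * (y + 2) / (4 * (y + 1)^2) * ((-1)^k / b^2) * E
      = (-1)^k * ((y+3)*(y+2)^3/4)"
    using pos unfolding E_b by (simp add: power_mult_distrib power2_eq_square power3_eq_cube)
  have cert_Suc_part: "zeilberger_certificate N (Suc k) * E
      = - ((-1)^k * zeilberger_poly (y+2) (x+1) * (x+1)^2)"
    using pos unfolding cert_Suc E_D' by (simp add: power_mult_distrib)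
  have cert_part: "zeilberger_certificate N k * E = (-1)^k * zeilberger_poly (y+2) x * (y+1-x)^2"
    using pos unfolding cert E_def by (simp add: power_mult_distrib)
  have "((-1)^k / A^2 + (y + 3) * (y + 2) / (4 * (y + 1)^2) * ((-1)^k / b^2)) * E
      = (-1)^k * ((y+2-x)^2 * (y+1-x)^2 + (y+3)*(y+2)^3/4)"
    unfolding distrib_right[where c = E] A_part b_part by (simp add: algebra_simps)
  also have "\<dots> = (-1)^k * (- zeilberger_poly (y+2) (x+1) * (x+1)^2
                              - zeilberger_poly (y+2) x * (y+1-x)^2)"
    unfolding zeilberger_poly_identity ..
  also have "\<dots> = (zeilberger_certificate N (Suc k) - zeilberger_certificate N k) * E"
    unfolding left_diff_distrib cert_Suc_part cert_part by (simp add: algebra_simps)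
  finally show ?thesis
    using \<open>E \<noteq> 0\<close> by (simp add: A_def b_def x_def y_def)
qed

definition alt_inv_binomial_sq_sum :: "nat \<Rightarrow> real" where
  "alt_inv_binomial_sq_sum m = (\<Sum>k=0..m. (-1)^k / (real (m choose k))^2)"

lemma alt_inv_binomial_sq_sum_recurrence:
  assumes "even N"
  shows "alt_inv_binomial_sq_sum (N+2)
           + (real N + 3) * (real N + 2) / (4 * (real N + 1)^2) * alt_inv_binomial_sq_sum N
         = (5 * real N + 13) / (2 * real N + 4)"
proof -
  define c where "c = (real N + 3) * (real N + 2) / (4 * (real N + 1)^2)"
  have "(\<Sum>k=0..N. (-1)^k / (real ((N+2) choose k))^2) + c * alt_inv_binomial_sq_sum N
      = (\<Sum>k=0..N. (-1)^k / (real ((N+2) choose k))^2 + c * ((-1)^k / (real (N choose k))^2))"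
    by (simp add: alt_inv_binomial_sq_sum_def sum.distrib sum_distrib_left)
  also have "\<dots> = (\<Sum>k=0..N. zeilberger_certificate N (Suc k) - zeilberger_certificate N k)"
    unfolding c_def by (rule sum.cong[OF refl zeilberger_certificate_telescopes]) simp
  also have "\<dots> = zeilberger_certificate N (Suc N) - zeilberger_certificate N 0"
    by (rule sum_Suc_diff) simp
  also have "\<dots> = - (zeilberger_poly (real N + 2) (real N + 1) + zeilberger_poly (real N + 2) 0)
                    / (real N + 2)^2"
    using assms by (simp add: zeilberger_certificate_def add.commute diff_divide_distrib)
  finally have head: "(\<Sum>k=0..N. (-1)^k / (real ((N+2) choose k))^2) + c * alt_inv_binomial_sq_sum N
      = - (zeilberger_poly (real N + 2) (real N + 1) + zeilberger_poly (real N + 2) 0)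
          / (real N + 2)^2" .
  \<comment> \<open>The terms \<open>k = N+1, N+2\<close> contribute \<open>-1/(N+2)^2 + 1\<close> for even \<open>N\<close>.\<close>
  have "alt_inv_binomial_sq_sum (N+2)
      = (\<Sum>k=0..N. (-1)^k / (real ((N+2) choose k))^2) - 1 / (real N + 2)^2 + 1"
    using assms by (simp add: alt_inv_binomial_sq_sum_def numeral_2_eq_2 add.commute)
  with head have "alt_inv_binomial_sq_sum (N+2) + c * alt_inv_binomial_sq_sum N
      = - (zeilberger_poly (real N + 2) (real N + 1) + zeilberger_poly (real N + 2) 0 + 1)
          / (real N + 2)^2 + 1"
    by (simp add: diff_divide_distrib add_divide_distrib)
  also have "\<dots> = (5 * real N + 13) / (2 * real N + 4)"
    by (simp add: zeilberger_poly_def field_simps) algebra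
  finally show ?thesis unfolding c_def .
qed

definition central_binomial_sum :: "nat \<Rightarrow> real" where
  "central_binomial_sum n =
     (3/4) * (\<Sum>k=1..n. (-1)^k * real ((2*k) choose k) / real k)
     + (\<Sum>k=0..n. (-1)^k * real ((2*k) choose k) / real (2*k+1))"

lemma central_binomial_sum_Suc:
  "central_binomial_sum (Suc n) = central_binomial_sum n
     + (-1)^Suc n * real ((2 * Suc n) choose Suc n) * (3 / (4 * (real n + 1)) + 1 / (2 * real n + 3))"
  by (simp add: central_binomial_sum_def algebra_simps del: binomial_Suc_Suc)

lemma alt_inv_binomial_sq_sum_even:
  "alt_inv_binomial_sq_sum (2*n)
     = real (2*n+1) * ((-1)^n / real ((2*n) choose n)) * central_binomial_sum n"
proof (induction n)
  case 0
  show ?case by (simp add: alt_inv_binomial_sq_sum_def central_binomial_sum_def)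
next
  case (Suc n)
  define z s C C' where "z = real n" and "s = (-1::real)^n"
    and "C = real ((2*n) choose n)" and "C' = real ((2 * Suc n) choose Suc n)"
  define T where "T = central_binomial_sum n"
  have "C > 0" "2*z+1 > 0" "z+1 > 0" by (simp_all add: C_def z_def)
  have C': "C' = 2 * (2*z+1) * C / (z+1)"
    using central_binomial_Suc[of n] by (simp add: C_def C'_def z_def field_simps)
  have coeff: "(2*z+3) * (2*z+2) / (4 * (2*z+1)^2) * ((2*z+1) * (s / C)) = (2*z+3) * (s / C')"
    unfolding C' using \<open>C > 0\<close> \<open>2*z+1 > 0\<close> \<open>z+1 > 0\<close>
    by (simp add: divide_simps power2_eq_square) algebra
  define K where "K = 3 / (4 * (z+1)) + 1 / (2*z+3)"
  have const: "(2*z+3) * K = (5 * (2*z) + 13) / (2 * (2*z) + 4)"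
    unfolding K_def using \<open>2*z+1 > 0\<close> \<open>z+1 > 0\<close> by (simp add: divide_simps)
  have "C' \<noteq> 0" by (simp add: C'_def del: binomial_Suc_Suc)
  have sign: "(- s / C') * (- (s * C')) = 1"
    using \<open>C' \<noteq> 0\<close> by (simp add: s_def flip: power_add)
  have "alt_inv_binomial_sq_sum (2 * Suc n)
      = (5 * (2*z) + 13) / (2 * (2*z) + 4)
        - (2*z+3) * (2*z+2) / (4 * (2*z+1)^2) * alt_inv_binomial_sq_sum (2*n)"
    using alt_inv_binomial_sq_sum_recurrence[of "2*n"] by (simp add: z_def algebra_simps)
  also have "\<dots> = (5 * (2*z) + 13) / (2 * (2*z) + 4) - (2*z+3) * (s / C') * T"
    unfolding Suc.IH coeff[symmetric] by (simp add: C_def s_def T_def z_def)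
  also have "\<dots> = (2*z+3) * (- s / C') * T
                  + (2*z+3) * ((- s / C') * (- (s * C'))) * K"
    unfolding const[symmetric] sign by (simp add: algebra_simps)
  also have "\<dots> = (2*z+3) * (- s / C') * (T - s * C' * K)"
    by (simp add: divide_inverse algebra_simps)
  also have "\<dots> = real (2 * Suc n + 1) * ((-1)^Suc n / real ((2 * Suc n) choose Suc n))
                  * central_binomial_sum (Suc n)"
    by (simp add: central_binomial_sum_Suc s_def C'_def z_def T_def K_def del: binomial_Suc_Suc)
  finally show ?case .
qed

theorem mainTheorem10:
  fixes n :: nat
  shows "(\<Sum>k=0..2*n. (-1::real)^k / (real ((2*n) choose k))^2)
       = real (2*n+1) * ((-1::real)^n / real ((2*n) choose n)) *
         ((3/4) * (\<Sum>k=1..n. (-1::real)^k * real ((2*k) choose k) / real k)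
          + (\<Sum>k=0..n. (-1::real)^k * real ((2*k) choose k) / real (2*k+1)))"
  using alt_inv_binomial_sq_sum_even[of n]
  unfolding alt_inv_binomial_sq_sum_def central_binomial_sum_def .

end
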